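(* Let $K\subset K^+\subset L$ be CW complexes such that $K^+$ is obtained from $K$ by attaching 1-cells and $L$ is obtained from $K^+$ by attaching 2-cells. Then the map $\pi_2(K^+,K)\to\pi_2(L,K)$ induced by inclusion is surjective if and only if both (a) $\pi_1(K)\to\pi_1(L)$ is injective, and (b) $\pi_2(K^+)\to\pi_2(L)$ is surjective.
   Context: All maps are induced by inclusion, with a basepoint in $K$. *)

theory Defs
  imports "HOL-Analysis.Analysis"
begin

text \<open>The closed n-disc, its interior (open cell) and boundary sphere, inside
  the library's Euclidean n-space (functions nat => real vanishing from index n on).\<close>

definition disc :: "nat \<Rightarrow> (nat \<Rightarrow> real) topology" where
  "disc n = subtopology (Euclidean_space n) {x. (\<Sum>i<n. (x i)\<^sup>2) \<le> 1}"

definition open_disc :: "nat \<Rightarrow> (nat \<Rightarrow> real) set" where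
  "open_disc n = {x \<in> topspace (Euclidean_space n). (\<Sum>i<n. (x i)\<^sup>2) < 1}"

definition disc_boundary :: "nat \<Rightarrow> (nat \<Rightarrow> real) set" where
  "disc_boundary n = {x \<in> topspace (Euclidean_space n). (\<Sum>i<n. (x i)\<^sup>2) = 1}"

text \<open>X is obtained from its closed subspace A by attaching n-cells: X is the pushout
  of A and a disjoint union of n-discs along attaching maps of the boundary spheres.\<close>

definition attached_cells :: "nat \<Rightarrow> 'a topology \<Rightarrow> 'a set \<Rightarrow> bool" where
  "attached_cells n X A \<longleftrightarrow>
     A \<subseteq> topspace X \<and>
     (\<exists>(I :: 'a set set) (\<phi> :: 'a set \<Rightarrow> (nat \<Rightarrow> real) \<Rightarrow> 'a).
        (\<forall>i\<in>I. continuous_map (disc n) X (\<phi> i)) \<and>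
        (\<forall>i\<in>I. \<phi> i ` disc_boundary n \<subseteq> A) \<and>
        (\<forall>i\<in>I. inj_on (\<phi> i) (open_disc n)) \<and>
        (\<forall>i\<in>I. \<phi> i ` open_disc n \<inter> A = {}) \<and>
        (\<forall>i\<in>I. \<forall>j\<in>I. i \<noteq> j \<longrightarrow> \<phi> i ` open_disc n \<inter> \<phi> j ` open_disc n = {}) \<and>
        topspace X = A \<union> (\<Union>i\<in>I. \<phi> i ` open_disc n) \<and>
        (\<forall>U. U \<subseteq> topspace X \<longrightarrow>
           (closedin X U \<longleftrightarrow>
              closedin (subtopology X A) (U \<inter> A) \<and>
              (\<forall>i\<in>I. closedin (disc n) {x \<in> topspace (disc n). \<phi> i x \<in> U}))))"

text \<open>(The index set I is taken to be a set of subsets of the space only to have some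
  index type of sufficient size; each cell can be indexed by its own open cell.)\<close>

definition cw_complex :: "'a topology \<Rightarrow> bool" where
  "cw_complex X \<longleftrightarrow>
     (\<exists>S :: nat \<Rightarrow> 'a set.
        attached_cells 0 (subtopology X (S 0)) {} \<and>
        (\<forall>n. S n \<subseteq> S (Suc n) \<and> attached_cells (Suc n) (subtopology X (S (Suc n))) (S n)) \<and>
        (\<Union>n. S n) = topspace X \<and>
        (\<forall>U. U \<subseteq> topspace X \<longrightarrow>
           (closedin X U \<longleftrightarrow> (\<forall>n. closedin (subtopology X (S n)) (U \<inter> S n)))))"

definition unit_interval :: "real topology" where
  "unit_interval = top_of_set {0..1}"

definition square :: "(real \<times> real) topology" where
  "square = top_of_set ({0..1} \<times> {0..1})"

definition square_bd :: "(real \<times> real) set" where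
  "square_bd = {(s,t). (s,t) \<in> {0..1} \<times> {0..1} \<and> (s = 0 \<or> s = 1 \<or> t = 0 \<or> t = 1)}"

definition square_J :: "(real \<times> real) set" where
  "square_J = {(s,t). (s,t) \<in> {0..1} \<times> {0..1} \<and> (s = 0 \<or> s = 1 \<or> t = 1)}"

definition based_loop :: "'a topology \<Rightarrow> 'a \<Rightarrow> (real \<Rightarrow> 'a) \<Rightarrow> bool" where
  "based_loop Y x0 p \<longleftrightarrow> continuous_map unit_interval Y p \<and> p 0 = x0 \<and> p 1 = x0"

definition based_2sphere :: "'a topology \<Rightarrow> 'a \<Rightarrow> (real \<times> real \<Rightarrow> 'a) \<Rightarrow> bool" where
  "based_2sphere Y x0 f \<longleftrightarrow> continuous_map square Y f \<and> (\<forall>z\<in>square_bd. f z = x0)"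

text \<open>Representatives of pi_2(Y, A, x0): maps (I^2, boundary, J) -> (Y, A, x0).\<close>
definition rel_2disc :: "'a topology \<Rightarrow> 'a set \<Rightarrow> 'a \<Rightarrow> (real \<times> real \<Rightarrow> 'a) \<Rightarrow> bool" where
  "rel_2disc Y A x0 f \<longleftrightarrow>
     continuous_map square Y f \<and> f ` square_bd \<subseteq> A \<and> (\<forall>z\<in>square_J. f z = x0)"

definition pi1_incl_injective :: "'a topology \<Rightarrow> 'a set \<Rightarrow> 'a \<Rightarrow> bool" where
  "pi1_incl_injective X A x0 \<longleftrightarrow>
     (\<forall>p q. based_loop (subtopology X A) x0 p \<and> based_loop (subtopology X A) x0 q \<and>
        homotopic_with (\<lambda>h. h 0 = x0 \<and> h 1 = x0) unit_interval X p q
        \<longrightarrow> homotopic_with (\<lambda>h. h 0 = x0 \<and> h 1 = x0) unit_interval (subtopology X A) p q)"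

definition pi2_incl_surjective :: "'a topology \<Rightarrow> 'a set \<Rightarrow> 'a \<Rightarrow> bool" where
  "pi2_incl_surjective X B x0 \<longleftrightarrow>
     (\<forall>f. based_2sphere X x0 f \<longrightarrow>
        (\<exists>g. based_2sphere (subtopology X B) x0 g \<and>
             homotopic_with (\<lambda>h. \<forall>z\<in>square_bd. h z = x0) square X g f))"

definition rel_pi2_incl_surjective :: "'a topology \<Rightarrow> 'a set \<Rightarrow> 'a set \<Rightarrow> 'a \<Rightarrow> bool" where
  "rel_pi2_incl_surjective X B A x0 \<longleftrightarrow>
     (\<forall>f. rel_2disc X A x0 f \<longrightarrow>
        (\<exists>g. rel_2disc (subtopology X B) A x0 g \<and>
             homotopic_with (\<lambda>h. h ` square_bd \<subseteq> A \<and> (\<forall>z\<in>square_J. h z = x0))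
               square X g f))"

end

(*
  An element of pi_2(L, K) is a square whose bottom edge is a loop in K that is null-homotopic
  in L.  If pi_1(K) -> pi_1(L) is injective, that loop is already null in K, and gluing the
  null-homotopy below the square deforms it, relative to (K, x0), into a sphere; surjectivity
  on pi_2 then moves the sphere into K+.

  Conversely, if pi_2(K+, K) -> pi_2(L, K) is onto, every square in L can be replaced by one in
  K+ with the same boundary: glue below the compressed square the track of its bottom edge
  along the compressing homotopy.  For spheres this is surjectivity on pi_2.  A null-homotopy
  in L of a loop in K, read as a square, becomes a null-homotopy in K+, hence in K: K+ retracts
  onto the path component of x0 in K (a clopen set, as K is a CW complex) by sending each
  1-cell along a path.
*)
theory Submission
  imports Defs
begin

abbreviation rel_square_cond :: "'a set \<Rightarrow> 'a \<Rightarrow> (real \<times> real \<Rightarrow> 'a) \<Rightarrow> bool" where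
  "rel_square_cond A x0 \<equiv> \<lambda>h. h ` square_bd \<subseteq> A \<and> (\<forall>z\<in>square_J. h z = x0)"

lemma prod_topology_top_of_set:
  "prod_topology (top_of_set S) (top_of_set T) = top_of_set (S \<times> T)"
  unfolding subtopology_Times[symmetric] prod_topology_euclidean by (rule refl)

lemma topspace_square: "topspace square = {0..1} \<times> {0..1}"
  by (simp add: square_def)

lemma square_J_subset_bd: "square_J \<subseteq> square_bd"
  and square_bd_subset: "square_bd \<subseteq> {0..1} \<times> {0..1}"
  unfolding square_bd_def square_J_def by auto

lemma square_bdE:
  assumes "z \<in> square_bd"
  obtains "z \<in> square_J" | s where "s \<in> {0..1}" "z = (s, 0)"
  using assms unfolding square_bd_def square_J_def by auto

lemma bottom_in_square_bd: "s \<in> {0..1} \<Longrightarrow> (s, 0) \<in> square_bd"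
  by (simp add: square_bd_def)

lemma ball_square_bd_cong:
  assumes "\<And>z. z \<in> {0..1} \<times> {0..1} \<Longrightarrow> h z = k z"
  shows "(\<forall>z\<in>square_bd. h z = c z) \<longleftrightarrow> (\<forall>z\<in>square_bd. k z = c z)"
  using assms square_bd_subset by (metis subsetD)

lemma continuous_map_top_of_set_compose:
  assumes "continuous_on S g" "g ` S \<subseteq> T" "continuous_map (top_of_set T) X f"
  shows "continuous_map (top_of_set S) X (\<lambda>x. f (g x))"
  using continuous_map_compose[of "top_of_set S" "top_of_set T" g X f] assms
  by (simp add: o_def image_subset_iff_funcset)

lemma continuous_map_top_of_set_cases_le:
  fixes p q :: "'b::topological_space \<Rightarrow> real"
  assumes "continuous_on S p" "continuous_on S q"
    and "continuous_map (top_of_set {x\<in>S. p x \<le> q x}) Y f"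
    and "continuous_map (top_of_set {x\<in>S. q x \<le> p x}) Y g"
    and "\<And>x. x \<in> S \<Longrightarrow> p x = q x \<Longrightarrow> f x = g x"
  shows "continuous_map (top_of_set S) Y (\<lambda>x. if p x \<le> q x then f x else g x)"
  using assms
  by (intro continuous_map_cases_le) (simp_all add: subtopology_subtopology Int_def conj_commute)

lemma homotopic_with_top_of_set_intro:
  assumes "continuous_map (top_of_set ({0..1::real} \<times> S)) Y h"
    and "\<And>x. x \<in> S \<Longrightarrow> h (0, x) = p x"
    and "\<And>x. x \<in> S \<Longrightarrow> h (1, x) = q x"
    and "\<And>t. t \<in> {0..1} \<Longrightarrow> P (\<lambda>x. h (t, x))"
    and "\<And>h k. (\<And>x. x \<in> S \<Longrightarrow> h x = k x) \<Longrightarrow> P h \<longleftrightarrow> P k"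
  shows "homotopic_with P (top_of_set S) Y p q"
proof (subst homotopic_with)
  show "\<exists>h. continuous_map (prod_topology (top_of_set {0..1::real}) (top_of_set S)) Y h \<and>
      (\<forall>x\<in>topspace (top_of_set S). h (0, x) = p x) \<and> (\<forall>x\<in>topspace (top_of_set S). h (1, x) = q x) \<and>
      (\<forall>t\<in>{0..1}. P (\<lambda>x. h (t, x)))"
    using assms(1-4) by (intro exI[of _ h]) (auto simp: prod_topology_top_of_set)
qed (rule assms(5), simp)

lemma homotopic_with_top_of_set_elim:
  assumes "homotopic_with P (top_of_set S) X f g"
  obtains F where "continuous_map (top_of_set ({0..1::real} \<times> S)) X F"
    "\<And>x. F (0, x) = f x" "\<And>x. F (1, x) = g x" "\<And>u. u \<in> {0..1} \<Longrightarrow> P (\<lambda>x. F (u, x))"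
  using assms unfolding homotopic_with_def prod_topology_top_of_set
  by (elim exE conjE) (rule that; auto)

text \<open>H is placed upside down below f: its bottom edge meets the bottom edge of f at
  t = 1/2, and its top edge becomes the new bottom edge.\<close>

definition stack_below :: "(real \<times> real \<Rightarrow> 'a) \<Rightarrow> (real \<times> real \<Rightarrow> 'a) \<Rightarrow> real \<times> real \<Rightarrow> 'a" where
  "stack_below f H =
     (\<lambda>z. if snd z \<le> 1/2 then H (fst z, 1 - 2 * snd z) else f (fst z, 2 * snd z - 1))"

lemma continuous_map_stack_below:
  assumes f: "continuous_map square X f" and H: "continuous_map square X H"
    and seam: "\<And>s. s \<in> {0..1} \<Longrightarrow> H (s, 0) = f (s, 0)"
  shows "continuous_map square X (stack_below f H)"
  unfolding square_def stack_below_def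
proof (rule continuous_map_top_of_set_cases_le)
  show "continuous_map (top_of_set {z \<in> {0..1} \<times> {0..1}. snd z \<le> 1/2}) X
          (\<lambda>z. H (fst z, 1 - 2 * snd z))"
    by (rule continuous_map_top_of_set_compose[OF _ _ H[unfolded square_def]])
       (auto intro!: continuous_intros)
  show "continuous_map (top_of_set {z \<in> {0..1} \<times> {0..1}. 1/2 \<le> snd z}) X
          (\<lambda>z. f (fst z, 2 * snd z - 1))"
    by (rule continuous_map_top_of_set_compose[OF _ _ f[unfolded square_def]])
       (auto intro!: continuous_intros)
  fix z :: "real \<times> real"
  assume "z \<in> {0..1} \<times> {0..1}" "snd z = 1/2"
  then have "1 - 2 * snd z = 0" "2 * snd z - 1 = 0" "fst z \<in> {0..1}"
    by (auto simp: mem_Times_iff)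
  with seam show "H (fst z, 1 - 2 * snd z) = f (fst z, 2 * snd z - 1)"
    by metis
qed (auto intro!: continuous_intros)

text \<open>At time u the lower part [0, u/2] runs through H up to height u, and f is
  squeezed into the rest.\<close>

definition stack_homotopy ::
    "(real \<times> real \<Rightarrow> 'a) \<Rightarrow> (real \<times> real \<Rightarrow> 'a) \<Rightarrow> real \<times> real \<times> real \<Rightarrow> 'a" where
  "stack_homotopy f H =
     (\<lambda>w. if snd (snd w) \<le> fst w / 2 then H (fst (snd w), fst w - 2 * snd (snd w))
          else f (fst (snd w), (snd (snd w) - fst w / 2) / (1 - fst w / 2)))"

lemma continuous_map_stack_homotopy:
  assumes f: "continuous_map square X f" and H: "continuous_map square X H"
    and seam: "\<And>s. s \<in> {0..1} \<Longrightarrow> H (s, 0) = f (s, 0)"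
  shows "continuous_map (top_of_set ({0..1} \<times> ({0..1} \<times> {0..1}))) X (stack_homotopy f H)"
  unfolding stack_homotopy_def
proof (rule continuous_map_top_of_set_cases_le)
  show "continuous_map (top_of_set {w \<in> {0..1} \<times> ({0..1} \<times> {0..1}). snd (snd w) \<le> fst w / 2}) X
          (\<lambda>w. H (fst (snd w), fst w - 2 * snd (snd w)))"
    by (rule continuous_map_top_of_set_compose[OF _ _ H[unfolded square_def]])
       (auto intro!: continuous_intros)
  show "continuous_map (top_of_set {w \<in> {0..1} \<times> ({0..1} \<times> {0..1}). fst w / 2 \<le> snd (snd w)}) X
          (\<lambda>w. f (fst (snd w), (snd (snd w) - fst w / 2) / (1 - fst w / 2)))"
    by (rule continuous_map_top_of_set_compose[OF _ _ f[unfolded square_def]])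
       (auto intro!: continuous_intros simp: divide_simps)
qed (auto intro!: continuous_intros simp: seam mem_Times_iff)

lemma stack_homotopy_square_J:
  assumes f_J: "\<And>z. z \<in> square_J \<Longrightarrow> f z = x0"
    and H_sides: "\<And>t. t \<in> {0..1} \<Longrightarrow> H (0, t) = x0 \<and> H (1, t) = x0"
    and u: "u \<in> {0..1}" and st: "(s, t) \<in> square_J"
  shows "stack_homotopy f H (u, (s, t)) = x0"
proof (cases "t \<le> u / 2")
  case True
  then have "s = 0 \<or> s = 1" "u - 2 * t \<in> {0..1}"
    using st u by (auto simp: square_J_def)
  then show ?thesis
    using True H_sides by (auto simp: stack_homotopy_def)
next
  case False
  have "(t - u/2) / (1 - u/2) \<in> {0..1}" "t = 1 \<Longrightarrow> (t - u/2) / (1 - u/2) = 1"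
    using False st u by (auto simp: square_J_def divide_simps)
  then have "(s, (t - u/2) / (1 - u/2)) \<in> square_J"
    using st by (auto simp: square_J_def)
  then show ?thesis
    using False f_J by (simp add: stack_homotopy_def)
qed

lemma homotopic_stack_below:
  assumes f: "continuous_map square X f" and H: "continuous_map square X H"
    and seam: "\<And>s. s \<in> {0..1} \<Longrightarrow> H (s, 0) = f (s, 0)"
    and f_J: "\<And>z. z \<in> square_J \<Longrightarrow> f z = x0"
    and H_sides: "\<And>t. t \<in> {0..1} \<Longrightarrow> H (0, t) = x0 \<and> H (1, t) = x0"
  shows "homotopic_with
           (\<lambda>h. (\<forall>z\<in>square_J. h z = x0) \<and> (\<forall>s\<in>{0..1}. \<exists>t\<in>{0..1}. h (s, 0) = H (s, t)))
           square X f (stack_below f H)"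
  unfolding square_def
proof (rule homotopic_with_top_of_set_intro[where h = "stack_homotopy f H"])
  show "continuous_map (top_of_set ({0..1} \<times> ({0..1} \<times> {0..1}))) X (stack_homotopy f H)"
    by (rule continuous_map_stack_homotopy[OF f H seam])
  show "stack_homotopy f H (0, z) = f z" if "z \<in> {0..1} \<times> {0..1}" for z
    using that seam by (cases z) (auto simp: stack_homotopy_def)
  show "stack_homotopy f H (1, z) = stack_below f H z" for z
  proof -
    have "(snd z - 1/2) / (1 - 1/2) = 2 * snd z - (1::real)"
      by (simp add: field_simps)
    then show ?thesis
      by (simp add: stack_homotopy_def stack_below_def mult.commute)
  qed
  fix u :: real
  assume u: "u \<in> {0..1}"
  have "stack_homotopy f H (u, (s, t)) = x0" if "(s, t) \<in> square_J" for s t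
    using stack_homotopy_square_J[OF f_J H_sides u that] .
  moreover have "stack_homotopy f H (u, (s, 0)) = H (s, u)" for s
    using u by (simp add: stack_homotopy_def)
  ultimately show "(\<forall>z\<in>square_J. stack_homotopy f H (u, z) = x0) \<and>
      (\<forall>s\<in>{0..1}. \<exists>t\<in>{0..1}. stack_homotopy f H (u, (s, 0)) = H (s, t))"
    using u by auto
next
  fix h k :: "real \<times> real \<Rightarrow> 'a"
  assume hk: "\<And>z. z \<in> {0..1} \<times> {0..1} \<Longrightarrow> h z = k z"
  then have "\<forall>z\<in>square_J. h z = k z"
    using square_J_subset_bd square_bd_subset by blast
  moreover have "\<forall>s\<in>{0..1}. h (s, 0) = k (s, 0)"
    using hk by simp
  ultimately show "((\<forall>z\<in>square_J. h z = x0) \<and> (\<forall>s\<in>{0..1}. \<exists>t\<in>{0..1}. h (s, 0) = H (s, t))) \<longleftrightarrow>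
      ((\<forall>z\<in>square_J. k z = x0) \<and> (\<forall>s\<in>{0..1}. \<exists>t\<in>{0..1}. k (s, 0) = H (s, t)))"
    by simp
qed

lemma homotopic_stack_below_rel:
  assumes f: "continuous_map square X f" and H: "continuous_map square X H"
    and seam: "\<And>s. s \<in> {0..1} \<Longrightarrow> H (s, 0) = f (s, 0)"
    and f_J: "\<And>z. z \<in> square_J \<Longrightarrow> f z = x0"
    and H_sides: "\<And>t. t \<in> {0..1} \<Longrightarrow> H (0, t) = x0 \<and> H (1, t) = x0"
    and H_A: "\<And>s t. s \<in> {0..1} \<Longrightarrow> t \<in> {0..1} \<Longrightarrow> H (s, t) \<in> A" and "x0 \<in> A"
  shows "homotopic_with (rel_square_cond A x0) square X f (stack_below f H)"
  using homotopic_stack_below[OF f H seam f_J H_sides]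
proof (rule homotopic_with_mono)
  fix h
  assume h: "(\<forall>z\<in>square_J. h z = x0) \<and> (\<forall>s\<in>{0..1}. \<exists>t\<in>{0..1}. h (s, 0) = H (s, t))"
  have "h z \<in> A" if "z \<in> square_bd" for z
    using that
  proof (cases rule: square_bdE)
    case 1
    then show ?thesis
      using h \<open>x0 \<in> A\<close> by auto
  next
    case (2 s)
    then obtain t where "t \<in> {0..1}" "h (s, 0) = H (s, t)"
      using h by blast
    then show ?thesis
      using H_A 2 by auto
  qed
  with h show "rel_square_cond A x0 h"
    by blast
qed

lemma homotopic_stack_below_bottom_edge:
  assumes f: "continuous_map square X f" and f_J: "\<And>z. z \<in> square_J \<Longrightarrow> f z = x0"
  shows "homotopic_with (\<lambda>h. \<forall>z\<in>square_bd. h z = f z) square X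
           f (stack_below f (\<lambda>z. f (fst z, 0)))"
proof -
  have "continuous_map square X (\<lambda>z. f (fst z, 0))"
    unfolding square_def
    by (rule continuous_map_top_of_set_compose[OF _ _ f[unfolded square_def]])
       (auto intro!: continuous_intros)
  moreover have "(0, 0) \<in> square_J" "(1, 0) \<in> square_J"
    by (auto simp: square_J_def)
  ultimately have "homotopic_with
      (\<lambda>h. (\<forall>z\<in>square_J. h z = x0) \<and> (\<forall>s\<in>{0..1}. \<exists>t\<in>{0..1::real}. h (s, 0) = f (s, 0)))
      square X f (stack_below f (\<lambda>z. f (fst z, 0)))"
    using homotopic_stack_below[OF f, of "\<lambda>z. f (fst z, 0)" x0] f_J by simp
  then show ?thesis
  proof (rule homotopic_with_mono)
    fix h
    assume h: "(\<forall>z\<in>square_J. h z = x0) \<and> (\<forall>s\<in>{0..1}. \<exists>t\<in>{0..1::real}. h (s, 0) = f (s, 0))"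
    show "\<forall>z\<in>square_bd. h z = f z"
    proof
      fix z
      assume "z \<in> square_bd"
      then show "h z = f z"
        by (cases rule: square_bdE) (use h f_J in auto)
    qed
  qed
qed

lemma one_minus_plus_mult_in_unit_interval:
  fixes s u :: real
  assumes "s \<in> {0..1}" "u \<in> {0..1}"
  shows "1 - s + s * u \<in> {0..1}"
  using assms mult_left_le[of u s] by auto

text \<open>At time u the map F(u, -) sits on top of the track of its bottom edge from time u
  to time 1, so the boundary values stay those of F(1, -).\<close>

lemma homotopic_stack_track:
  assumes F: "continuous_map (top_of_set ({0..1::real} \<times> ({0..1} \<times> {0..1}))) X F"
    and F_J: "\<And>u z. u \<in> {0..1} \<Longrightarrow> z \<in> square_J \<Longrightarrow> F (u, z) = x0"
  shows "homotopic_with (\<lambda>h. \<forall>z\<in>square_bd. h z = F (1, z)) square X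
           (stack_below (\<lambda>z. F (0, z)) (\<lambda>z. F (snd z, (fst z, 0))))
           (stack_below (\<lambda>z. F (1, z)) (\<lambda>z. F (1, (fst z, 0))))"
proof -
  define G where "G w =
    (if snd (snd w) \<le> 1/2 then F (1 - 2 * snd (snd w) + 2 * snd (snd w) * fst w, (fst (snd w), 0))
     else F (fst w, (fst (snd w), 2 * snd (snd w) - 1)))" for w :: "real \<times> real \<times> real"
  have "continuous_map (top_of_set ({0..1} \<times> ({0..1} \<times> {0..1}))) X G"
    unfolding G_def[abs_def]
  proof (rule continuous_map_top_of_set_cases_le)
    show "continuous_map (top_of_set {w \<in> {0..1} \<times> ({0..1} \<times> {0..1}). snd (snd w) \<le> 1/2}) X
        (\<lambda>w. F (1 - 2 * snd (snd w) + 2 * snd (snd w) * fst w, (fst (snd w), 0)))"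
      by (rule continuous_map_top_of_set_compose[OF _ _ F])
         (auto intro!: continuous_intros one_minus_plus_mult_in_unit_interval)
    show "continuous_map (top_of_set {w \<in> {0..1} \<times> ({0..1} \<times> {0..1}). 1/2 \<le> snd (snd w)}) X
        (\<lambda>w. F (fst w, (fst (snd w), 2 * snd (snd w) - 1)))"
      by (rule continuous_map_top_of_set_compose[OF _ _ F]) (auto intro!: continuous_intros)
    fix w :: "real \<times> real \<times> real"
    assume half: "snd (snd w) = 1/2"
    have "1 - 2 * snd (snd w) + 2 * snd (snd w) * fst w = fst w" "2 * snd (snd w) - 1 = 0"
      by (simp_all only: half)
    then show "F (1 - 2 * snd (snd w) + 2 * snd (snd w) * fst w, (fst (snd w), 0)) =
        F (fst w, (fst (snd w), 2 * snd (snd w) - 1))"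
      by metis
  qed (auto intro!: continuous_intros)
  moreover have "G (u, z) = F (1, z)" if u: "u \<in> {0..1}" and z: "z \<in> square_bd" for u z
    using z
  proof (cases rule: square_bdE)
    case 1
    then obtain s t where st: "z = (s, t)" "s \<in> {0..1}" "t \<in> {0..1}" "s = 0 \<or> s = 1 \<or> t = 1"
      by (auto simp: square_J_def)
    then have "(s, 0) \<in> square_J" if "t \<le> 1/2"
      using that by (auto simp: square_J_def)
    moreover have "(s, 2 * t - 1) \<in> square_J" if "\<not> t \<le> 1/2"
      using that st by (auto simp: square_J_def)
    ultimately show ?thesis
      using 1 st u F_J one_minus_plus_mult_in_unit_interval[of "2 * t" u] by (auto simp: G_def)
  qed (simp add: G_def)
  ultimately show ?thesis
    unfolding square_def
    by (intro homotopic_with_top_of_set_intro[where h = G] ball_square_bd_cong)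
       (auto simp: G_def stack_below_def)
qed

lemma rel_pi2_incl_surjective_homotopic_rel_boundary:
  assumes surj: "rel_pi2_incl_surjective L Kp K x0" and "K \<subseteq> Kp"
    and f: "rel_2disc L K x0 f"
  obtains m where "continuous_map square (subtopology L Kp) m"
    "homotopic_with (\<lambda>h. \<forall>z\<in>square_bd. h z = f z) square L m f"
proof -
  obtain g where g: "rel_2disc (subtopology L Kp) K x0 g"
    and gf: "homotopic_with (rel_square_cond K x0) square L g f"
    using surj f unfolding rel_pi2_incl_surjective_def by blast
  obtain F where F: "continuous_map (top_of_set ({0..1::real} \<times> ({0..1} \<times> {0..1}))) L F"
    and F0: "\<And>z. F (0, z) = g z" and F1: "\<And>z. F (1, z) = f z"
    and F_rel: "\<And>u. u \<in> {0..1} \<Longrightarrow> rel_square_cond K x0 (\<lambda>z. F (u, z))"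
    by (rule homotopic_with_top_of_set_elim[OF gf[unfolded square_def]], rule that)
  define E where "E z = F (snd z, (fst z, 0))" for z :: "real \<times> real"
  have "continuous_map square L E"
    unfolding E_def square_def
    by (rule continuous_map_top_of_set_compose[OF _ _ F]) (auto intro!: continuous_intros)
  moreover have "E (s, u) \<in> K" if "s \<in> {0..1}" "u \<in> {0..1}" for s u
    using F_rel[OF that(2)] bottom_in_square_bd[OF that(1)] by (auto simp: E_def)
  ultimately have E: "continuous_map square (subtopology L Kp) E"
    using \<open>K \<subseteq> Kp\<close> by (auto simp: continuous_map_in_subtopology topspace_square)
  have "continuous_map square (subtopology L Kp) g"
    using g by (simp add: rel_2disc_def)
  then have m: "continuous_map square (subtopology L Kp) (stack_below g E)"
    by (rule continuous_map_stack_below[OF _ E]) (simp add: E_def F0)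
  have track: "homotopic_with (\<lambda>h. \<forall>z\<in>square_bd. h z = f z) square L
      (stack_below g E) (stack_below f (\<lambda>z. f (fst z, 0)))"
    using homotopic_stack_track[OF F, of x0] F_rel
    by (simp add: F0 F1 E_def[abs_def])
  have bottom: "homotopic_with (\<lambda>h. \<forall>z\<in>square_bd. h z = f z) square L
      f (stack_below f (\<lambda>z. f (fst z, 0)))"
    using f by (intro homotopic_stack_below_bottom_edge) (auto simp: rel_2disc_def)
  show thesis
    by (rule that[OF m homotopic_with_trans[OF track homotopic_with_symD[OF bottom]]])
qed

text \<open>The path (0,0) \<rightarrow> (0,1) \<rightarrow> (1,1) \<rightarrow> (1,0) along the left, top and right sides of
  the square, one side per third of the time.\<close>

definition three_sides :: "real \<Rightarrow> real \<times> real" where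
  "three_sides s = (max 0 (min 1 (3 * s - 1)), min 1 (min (3 * s) (3 - 3 * s)))"

lemma three_sides_in_square_J: "s \<in> {0..1} \<Longrightarrow> three_sides s \<in> square_J"
  by (auto simp: three_sides_def square_J_def max_def min_def)

lemma three_sides_in_square: "s \<in> {0..1} \<Longrightarrow> three_sides s \<in> {0..1} \<times> {0..1}"
  using three_sides_in_square_J square_J_subset_bd square_bd_subset by blast

lemma three_sides_thirds:
  assumes "s \<in> {0..1}"
  shows "three_sides (s / 3) = (0, s)" and "three_sides ((1 + s) / 3) = (s, 1)"
    and "three_sides (1 - s / 3) = (1, s)"
  using assms by (auto simp: three_sides_def max_def min_def field_simps)

lemma continuous_on_three_sides [continuous_intros]:
  "continuous_on S f \<Longrightarrow> continuous_on S (\<lambda>x. three_sides (f x))"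
  unfolding three_sides_def by (intro continuous_intros)

lemma segment_in_square:
  "a \<in> {0..1} \<times> {0..1} \<Longrightarrow> b \<in> {0..1} \<times> {0..1} \<Longrightarrow> t \<in> {0..1::real} \<Longrightarrow>
    (1 - t) *\<^sub>R a + t *\<^sub>R b \<in> {0..1::real} \<times> {0..1::real}"
  by (intro convexD convex_Times convex_real_interval) auto

text \<open>A homotopy P of based loops, read along the left, top and right sides of its square,
  gives a loop that is null-homotopic by contraction onto the bottom side.\<close>

lemma square_of_loop_homotopy:
  assumes P: "continuous_map (top_of_set ({0..1} \<times> {0..1})) X P"
    and P_ends: "\<And>u. u \<in> {0..1} \<Longrightarrow> P (u, 0) = x0 \<and> P (u, 1) = x0"
  obtains f where "continuous_map square X f" "\<And>z. z \<in> square_J \<Longrightarrow> f z = x0"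
    "\<And>s. f (s, 0) = P (three_sides s)"
proof
  let ?f = "\<lambda>z. P ((1 - snd z) *\<^sub>R three_sides (fst z) + snd z *\<^sub>R (fst z, 0))"
  show "continuous_map square X ?f"
    unfolding square_def
  proof (rule continuous_map_top_of_set_compose[OF _ _ P])
    show "(\<lambda>z. (1 - snd z) *\<^sub>R three_sides (fst z) + snd z *\<^sub>R (fst z, 0)) ` ({0..1} \<times> {0..1})
        \<subseteq> {0..1} \<times> {0..1}"
      by (intro image_subsetI segment_in_square) (auto simp: three_sides_in_square)
  qed (intro continuous_intros)
  show "?f z = x0" if "z \<in> square_J" for z
    using that P_ends by (auto simp: square_J_def three_sides_def)
qed (simp add: zero_prod_def[symmetric])

lemma homotopic_loops_of_square:
  assumes m: "continuous_map square Y m" and m_J: "\<And>z. z \<in> square_J \<Longrightarrow> m z = x0"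
    and m_bottom: "\<And>s. s \<in> {0..1} \<Longrightarrow> m (s, 0) = P (three_sides s)"
    and P_left: "\<And>t. t \<in> {0..1} \<Longrightarrow> P (0, t) = p t"
    and P_right: "\<And>t. t \<in> {0..1} \<Longrightarrow> P (1, t) = q t"
    and P_top: "\<And>u. u \<in> {0..1} \<Longrightarrow> P (u, 1) = x0"
  shows "homotopic_with (\<lambda>h. h 0 = x0 \<and> h 1 = x0) unit_interval Y p q"
proof -
  \<comment> \<open>Q(u, -) follows the segment from three_sides u to ((1 + u) / 3, 0), both sent to x0
    by m; for u = 0 and u = 1 it runs over the thirds of the bottom side carrying p and q.\<close>
  define Q where "Q w = m ((1 - snd w) *\<^sub>R three_sides (fst w) + snd w *\<^sub>R ((1 + fst w) / 3, 0))"
    for w :: "real \<times> real"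
  have "continuous_map (top_of_set ({0..1} \<times> {0..1})) Y Q"
    unfolding Q_def
  proof (rule continuous_map_top_of_set_compose[OF _ _ m[unfolded square_def]])
    show "(\<lambda>w. (1 - snd w) *\<^sub>R three_sides (fst w) + snd w *\<^sub>R ((1 + fst w) / 3, 0)) `
        ({0..1} \<times> {0..1}) \<subseteq> {0..1} \<times> {0..1}"
      by (intro image_subsetI segment_in_square) (auto simp: three_sides_in_square)
  qed (auto intro!: continuous_intros)
  moreover have "Q (0, t) = p t" "Q (1, t) = q t" if "t \<in> {0..1}" for t
  proof -
    have "t / 3 \<in> {0..1}" "1 - t / 3 \<in> {0..1}"
      using that by auto
    then show "Q (0, t) = p t" "Q (1, t) = q t"
      using that m_bottom three_sides_thirds[OF that] P_left P_right
      by (auto simp: Q_def three_sides_def algebra_simps)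
  qed
  moreover have "Q (u, 0) = x0 \<and> Q (u, 1) = x0" if "u \<in> {0..1}" for u
  proof -
    have "(1 + u) / 3 \<in> {0..1}"
      using that by auto
    then show ?thesis
      using that m_J three_sides_in_square_J m_bottom three_sides_thirds(2)[OF that] P_top
      by (simp add: Q_def zero_prod_def[symmetric])
  qed
  ultimately show ?thesis
    unfolding unit_interval_def by (intro homotopic_with_top_of_set_intro[where h = Q]) auto
qed

definition characteristic_maps ::
    "nat \<Rightarrow> 'a topology \<Rightarrow> 'a set \<Rightarrow> 'a set set \<Rightarrow> ('a set \<Rightarrow> (nat \<Rightarrow> real) \<Rightarrow> 'a) \<Rightarrow> bool" where
  "characteristic_maps n X A I \<phi> \<longleftrightarrow>
     (\<forall>i\<in>I. continuous_map (disc n) X (\<phi> i)) \<and>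
     (\<forall>i\<in>I. \<phi> i ` disc_boundary n \<subseteq> A) \<and>
     (\<forall>i\<in>I. inj_on (\<phi> i) (open_disc n)) \<and>
     (\<forall>i\<in>I. \<phi> i ` open_disc n \<inter> A = {}) \<and>
     (\<forall>i\<in>I. \<forall>j\<in>I. i \<noteq> j \<longrightarrow> \<phi> i ` open_disc n \<inter> \<phi> j ` open_disc n = {}) \<and>
     topspace X = A \<union> (\<Union>i\<in>I. \<phi> i ` open_disc n) \<and>
     (\<forall>U. U \<subseteq> topspace X \<longrightarrow>
        (closedin X U \<longleftrightarrow>
           closedin (subtopology X A) (U \<inter> A) \<and>
           (\<forall>i\<in>I. closedin (disc n) {x \<in> topspace (disc n). \<phi> i x \<in> U})))"

lemma attached_cells_iff_characteristic_maps:
  "attached_cells n X A \<longleftrightarrow> A \<subseteq> topspace X \<and> (\<exists>I \<phi>. characteristic_maps n X A I \<phi>)"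
  unfolding attached_cells_def characteristic_maps_def by (rule refl)

lemma closedin_characteristic_maps:
  assumes "characteristic_maps n X A I \<phi>" and "U \<subseteq> topspace X"
    and "closedin (subtopology X A) (U \<inter> A)"
    and "\<And>i. i \<in> I \<Longrightarrow> closedin (disc n) {x \<in> topspace (disc n). \<phi> i x \<in> U}"
  shows "closedin X U"
proof -
  have "\<forall>U. U \<subseteq> topspace X \<longrightarrow>
      (closedin X U \<longleftrightarrow>
         closedin (subtopology X A) (U \<inter> A) \<and>
         (\<forall>i\<in>I. closedin (disc n) {x \<in> topspace (disc n). \<phi> i x \<in> U}))"
    using assms(1) by (simp add: characteristic_maps_def)
  from this[rule_format, OF assms(2)] assms(3,4) show ?thesis
    by simp
qed

lemma continuous_map_characteristic_maps:
  assumes cells: "characteristic_maps n X A I \<phi>"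
    and r: "r \<in> topspace X \<rightarrow> topspace Y" "continuous_map (subtopology X A) Y r"
    and r\<phi>: "\<And>i. i \<in> I \<Longrightarrow> continuous_map (disc n) Y (r \<circ> \<phi> i)"
  shows "continuous_map X Y r"
  unfolding continuous_map_closedin
proof (intro conjI allI impI r(1))
  fix U
  assume U: "closedin Y U"
  let ?V = "{y \<in> topspace X. r y \<in> U}"
  show "closedin X ?V"
  proof (rule closedin_characteristic_maps[OF cells])
    have "?V \<inter> A = {y \<in> topspace (subtopology X A). r y \<in> U}"
      by auto
    then show "closedin (subtopology X A) (?V \<inter> A)"
      using closedin_continuous_map_preimage[OF r(2) U] by simp
    fix i
    assume i: "i \<in> I"
    then have "continuous_map (disc n) X (\<phi> i)"
      using cells by (simp add: characteristic_maps_def)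
    then have "\<phi> i \<in> topspace (disc n) \<rightarrow> topspace X"
      by (rule continuous_map_funspace)
    then have "{x \<in> topspace (disc n). \<phi> i x \<in> ?V} = {x \<in> topspace (disc n). (r \<circ> \<phi> i) x \<in> U}"
      by auto
    then show "closedin (disc n) {x \<in> topspace (disc n). \<phi> i x \<in> ?V}"
      using closedin_continuous_map_preimage[OF r\<phi>[OF i] U] by simp
  qed (rule Collect_restrict)
qed

lemma topspace_disc: "topspace (disc n) = {x. (\<forall>i\<ge>n. x i = 0) \<and> (\<Sum>i<n. (x i)\<^sup>2) \<le> 1}"
  by (auto simp: disc_def topspace_Euclidean_space)

lemma path_connected_space_disc: "path_connected_space (disc n)"
proof -
  have "path_component_of (disc n) x (\<lambda>i. 0)" if x: "x \<in> topspace (disc n)" for x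
    unfolding path_component_of_def
  proof (intro exI conjI)
    let ?g = "\<lambda>t i. (1 - t) * x i"
    have x_disc: "\<forall>i\<ge>n. x i = 0" "(\<Sum>i<n. (x i)\<^sup>2) \<le> 1"
      using x by (auto simp: topspace_disc)
    have "?g t \<in> topspace (disc n)" if t: "t \<in> {0..1}" for t
    proof -
      have "(\<Sum>i<n. ((1 - t) * x i)\<^sup>2) = (1 - t)\<^sup>2 * (\<Sum>i<n. (x i)\<^sup>2)"
        by (simp add: power_mult_distrib sum_distrib_left)
      also have "\<dots> \<le> 1"
        using t x_disc by (intro mult_le_one) (auto simp: abs_square_le_1 intro: sum_nonneg)
      finally show ?thesis
        using x_disc by (auto simp: topspace_disc)
    qed
    moreover have "continuous_map (top_of_set {0..1}) (powertop_real UNIV) ?g"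
      unfolding continuous_map_componentwise_UNIV by (auto intro!: continuous_intros)
    ultimately show "pathin (disc n) ?g"
      unfolding pathin_def disc_def Euclidean_space_def continuous_map_in_subtopology
      by (auto simp: topspace_disc disc_def Euclidean_space_def)
  qed auto
  then show ?thesis
    unfolding path_connected_space_iff_path_component
    by (metis path_component_of_sym path_component_of_trans)
qed

text \<open>Each closed cell is path-connected, hence lies in D or misses it.\<close>

lemma closedin_attached_cells_union_path_components:
  assumes att: "attached_cells n X A"
    and D_A: "closedin (subtopology X A) (D \<inter> A)"
    and D: "\<And>T. path_connectedin X T \<Longrightarrow> T \<subseteq> D \<or> T \<inter> D = {}"
  shows "closedin X (D \<inter> topspace X)"
proof -
  obtain I \<phi> where A: "A \<subseteq> topspace X" and cells: "characteristic_maps n X A I \<phi>"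
    using att by (auto simp: attached_cells_iff_characteristic_maps)
  show ?thesis
  proof (rule closedin_characteristic_maps[OF cells])
    have "D \<inter> topspace X \<inter> A = D \<inter> A"
      using A by auto
    then show "closedin (subtopology X A) (D \<inter> topspace X \<inter> A)"
      using D_A by simp
    fix i
    assume "i \<in> I"
    then have \<phi>: "continuous_map (disc n) X (\<phi> i)"
      using cells by (simp add: characteristic_maps_def)
    then have "path_connectedin X (\<phi> i ` topspace (disc n))"
      by (simp add: path_connectedin_continuous_map_image path_connectedin_topspace
          path_connected_space_disc)
    then consider "\<phi> i ` topspace (disc n) \<subseteq> D" | "\<phi> i ` topspace (disc n) \<inter> D = {}"
      using D by blast
    then show "closedin (disc n) {x \<in> topspace (disc n). \<phi> i x \<in> D \<inter> topspace X}"
    proof cases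
      case 1
      then have "{x \<in> topspace (disc n). \<phi> i x \<in> D \<inter> topspace X} = topspace (disc n)"
        using continuous_map_image_subset_topspace[OF \<phi>] by auto
      then show ?thesis
        by (metis closedin_topspace)
    next
      case 2
      then have "{x \<in> topspace (disc n). \<phi> i x \<in> D \<inter> topspace X} = {}"
        by (auto simp: disjoint_iff)
      then show ?thesis
        by (metis closedin_empty)
    qed
  qed (rule inf_le2)
qed

lemma closedin_cw_complex_union_path_components:
  assumes cw: "cw_complex X" and "D \<subseteq> topspace X"
    and D: "\<And>T. path_connectedin X T \<Longrightarrow> T \<subseteq> D \<or> T \<inter> D = {}"
  shows "closedin X D"
proof -
  obtain S :: "nat \<Rightarrow> 'a set" where
    S0: "attached_cells 0 (subtopology X (S 0)) {}" and
    S_Suc: "\<forall>n. S n \<subseteq> S (Suc n) \<and> attached_cells (Suc n) (subtopology X (S (Suc n))) (S n)" and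
    S_cover: "(\<Union>n. S n) = topspace X" and
    weak: "\<forall>U. U \<subseteq> topspace X \<longrightarrow>
           (closedin X U \<longleftrightarrow> (\<forall>n. closedin (subtopology X (S n)) (U \<inter> S n)))"
    using cw unfolding cw_complex_def by (elim exE conjE) (rule that)
  have D_S: "D \<inter> topspace (subtopology X (S n)) = D \<inter> S n" for n
    using S_cover by auto
  have D_sub: "T \<subseteq> D \<or> T \<inter> D = {}" if "path_connectedin (subtopology X Z) T" for Z T
    using that D path_connectedin_subtopology by blast
  have "closedin (subtopology X (S n)) (D \<inter> S n)" for n
  proof (induction n)
    case 0
    have "closedin (subtopology X (S 0)) (D \<inter> topspace (subtopology X (S 0)))"
      by (rule closedin_attached_cells_union_path_components[OF S0], simp, rule D_sub)
    then show ?case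
      by (simp only: D_S)
  next
    case (Suc n)
    have "subtopology (subtopology X (S (Suc n))) (S n) = subtopology X (S n)"
      using S_Suc by (simp add: subtopology_subtopology Int_absorb1)
    then have "closedin (subtopology X (S (Suc n))) (D \<inter> topspace (subtopology X (S (Suc n))))"
      using S_Suc Suc.IH
      by (intro closedin_attached_cells_union_path_components[of "Suc n" _ "S n"] D_sub) simp_all
    then show ?case
      by (simp only: D_S)
  qed
  then show ?thesis
    using weak \<open>D \<subseteq> topspace X\<close> by blast
qed

lemma cw_complex_path_component_clopen:
  assumes cw: "cw_complex X"
  shows "closedin X (path_component_of_set X x)" and "openin X (path_component_of_set X x)"
proof -
  let ?C = "path_component_of_set X x"
  have C: "?C \<subseteq> topspace X"
    by (rule path_component_of_subset_topspace)
  have meets: "T \<subseteq> ?C" if T: "path_connectedin X T" "T \<inter> ?C \<noteq> {}" for T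
  proof -
    obtain y where y: "y \<in> T" "y \<in> ?C"
      using T by blast
    then have "path_component_of X x = path_component_of X y"
      using path_component_of_equiv by (metis mem_Collect_eq)
    then show ?thesis
      using path_component_of_maximal[OF T(1) y(1)] by simp
  qed
  show closed: "closedin X ?C"
    using meets by (intro closedin_cw_complex_union_path_components[OF cw C]) blast
  have "closedin X (topspace X - ?C)"
  proof (rule closedin_cw_complex_union_path_components[OF cw Diff_subset])
    fix T
    assume T: "path_connectedin X T"
    then show "T \<subseteq> topspace X - ?C \<or> T \<inter> (topspace X - ?C) = {}"
      using meets[OF T] path_connectedin_subset_topspace[OF T] by blast
  qed
  then show "openin X ?C"
    using C by (simp add: openin_closedin_eq)
qed

lemma continuous_map_collapse_clopen:
  assumes closed: "closedin X C" and opn: "openin X C" and "a \<in> C"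
  shows "continuous_map X (subtopology X C) (\<lambda>y. if y \<in> C then y else a)"
proof -
  have C: "C \<subseteq> topspace X"
    using closedin_subset[OF closed] .
  have "continuous_map X X (\<lambda>y. if y \<in> C then y else a)"
    unfolding continuous_map_closedin
  proof (intro conjI allI impI)
    show "(\<lambda>y. if y \<in> C then y else a) \<in> topspace X \<rightarrow> topspace X"
      using C \<open>a \<in> C\<close> by auto
    fix U
    assume U: "closedin X U"
    have "{y \<in> topspace X. (if y \<in> C then y else a) \<in> U} =
        (C \<inter> U) \<union> (if a \<in> U then topspace X - C else {})"
      using C by auto
    moreover have "closedin X (topspace X - C)"
      using opn by (simp add: closedin_diff)
    ultimately show "closedin X {y \<in> topspace X. (if y \<in> C then y else a) \<in> U}"
      using U closed by (simp add: closedin_Un closedin_Int)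
  qed
  then show ?thesis
    using \<open>a \<in> C\<close> by (auto simp: continuous_map_in_subtopology)
qed

lemma topspace_disc_eq_open_disc_Un_boundary:
  "topspace (disc n) = open_disc n \<union> disc_boundary n"
  by (auto simp: disc_def open_disc_def disc_boundary_def)

definition cell_extension ::
    "nat \<Rightarrow> 'a set \<Rightarrow> 'a set set \<Rightarrow> ('a set \<Rightarrow> (nat \<Rightarrow> real) \<Rightarrow> 'a) \<Rightarrow> ('a \<Rightarrow> 'b)
      \<Rightarrow> ('a set \<Rightarrow> (nat \<Rightarrow> real) \<Rightarrow> 'b) \<Rightarrow> 'a \<Rightarrow> 'b" where
  "cell_extension n A I \<phi> \<rho> g y =
     (if y \<in> A then \<rho> y
      else let i = SOME i. i \<in> I \<and> y \<in> \<phi> i ` open_disc n in g i (inv_into (open_disc n) (\<phi> i) y))"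

lemma cell_extension_characteristic_map:
  assumes cells: "characteristic_maps n X A I \<phi>"
    and g_\<phi>: "\<And>i x. i \<in> I \<Longrightarrow> x \<in> disc_boundary n \<Longrightarrow> g i x = \<rho> (\<phi> i x)"
    and i: "i \<in> I" and x: "x \<in> topspace (disc n)"
  shows "cell_extension n A I \<phi> \<rho> g (\<phi> i x) = g i x"
proof (cases "x \<in> open_disc n")
  case True
  let ?j = "SOME j. j \<in> I \<and> \<phi> i x \<in> \<phi> j ` open_disc n"
  have "?j \<in> I \<and> \<phi> i x \<in> \<phi> ?j ` open_disc n"
    by (rule someI[of _ i]) (use i True in blast)
  moreover have "\<phi> i ` open_disc n \<inter> \<phi> j ` open_disc n = {}" if "j \<in> I" "j \<noteq> i" for j
    using cells i that by (simp add: characteristic_maps_def)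
  ultimately have "?j = i"
    using True by blast
  moreover have "\<phi> i ` open_disc n \<inter> A = {}" "inj_on (\<phi> i) (open_disc n)"
    using cells i by (simp_all add: characteristic_maps_def)
  then have "\<phi> i x \<notin> A" "inj_on (\<phi> i) (open_disc n)"
    using True by blast+
  ultimately show ?thesis
    using True by (simp add: cell_extension_def)
next
  case False
  then have "x \<in> disc_boundary n"
    using x topspace_disc_eq_open_disc_Un_boundary by blast
  moreover have "\<phi> i ` disc_boundary n \<subseteq> A"
    using cells i by (simp add: characteristic_maps_def)
  ultimately show ?thesis
    using g_\<phi>[OF i] by (auto simp: cell_extension_def)
qed

lemma attached_cells_extension:
  assumes cells: "characteristic_maps n X A I \<phi>" and A: "A \<subseteq> topspace X"
    and \<rho>: "continuous_map (subtopology X A) Y \<rho>"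
    and g: "\<And>i. i \<in> I \<Longrightarrow> continuous_map (disc n) Y (g i)"
    and g_\<phi>: "\<And>i x. i \<in> I \<Longrightarrow> x \<in> disc_boundary n \<Longrightarrow> g i x = \<rho> (\<phi> i x)"
  obtains r where "continuous_map X Y r" "\<And>x. x \<in> A \<Longrightarrow> r x = \<rho> x"
proof
  let ?r = "cell_extension n A I \<phi> \<rho> g"
  have r_\<phi>: "?r (\<phi> i x) = g i x" if "i \<in> I" "x \<in> topspace (disc n)" for i x
    using cells g_\<phi> that by (rule cell_extension_characteristic_map)
  show "?r x = \<rho> x" if "x \<in> A" for x
    using that by (simp add: cell_extension_def)
  show "continuous_map X Y ?r"
  proof (rule continuous_map_characteristic_maps[OF cells])
    show "?r \<in> topspace X \<rightarrow> topspace Y"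
    proof
      fix y
      assume "y \<in> topspace X"
      moreover have "topspace X = A \<union> (\<Union>i\<in>I. \<phi> i ` open_disc n)"
        using cells by (simp add: characteristic_maps_def)
      ultimately consider "y \<in> A" | i x where "i \<in> I" "x \<in> open_disc n" "y = \<phi> i x"
        by auto
      then show "?r y \<in> topspace Y"
      proof cases
        case 1
        then show ?thesis
          using continuous_map_funspace[OF \<rho>] A by (auto simp: cell_extension_def)
      next
        case 2
        then show ?thesis
          using r_\<phi> continuous_map_funspace[OF g] topspace_disc_eq_open_disc_Un_boundary by auto
      qed
    qed
    show "continuous_map (subtopology X A) Y ?r"
      by (rule continuous_map_eq[OF \<rho>]) (simp add: cell_extension_def)
    show "continuous_map (disc n) Y (?r \<circ> \<phi> i)" if "i \<in> I" for i
      using g[OF that] by (rule continuous_map_eq) (simp add: r_\<phi> that)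
  qed
qed

lemma disc_boundary_1_cases:
  assumes "x \<in> disc_boundary 1"
  shows "x = (\<lambda>j. if j = 0 then 1 else 0) \<or> x = (\<lambda>j. if j = 0 then -1 else 0)"
proof -
  have "\<forall>j\<ge>1. x j = 0" "(x 0)\<^sup>2 = 1"
    using assms by (auto simp: disc_boundary_def topspace_Euclidean_space)
  then show ?thesis
    by (auto simp: power2_eq_1_iff fun_eq_iff)
qed

lemma continuous_map_disc_1_to_unit_interval:
  "continuous_map (disc 1) (top_of_set {0..1}) (\<lambda>x. (x 0 + 1) / 2)"
proof -
  have "continuous_map (disc 1) euclideanreal (\<lambda>x. x 0)"
    unfolding disc_def Euclidean_space_def
    by (intro continuous_map_from_subtopology continuous_map_product_projection) simp
  then have "continuous_map (disc 1) euclideanreal (\<lambda>x. (x 0 + 1) / 2)"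
    by (intro continuous_intros) auto
  moreover have "(x 0 + 1) / 2 \<in> {0..1}" if "x \<in> topspace (disc 1)" for x
  proof -
    have "(x 0)\<^sup>2 \<le> 1"
      using that by (simp add: topspace_disc)
    then show ?thesis
      by (auto simp: abs_square_le_1 abs_le_iff)
  qed
  ultimately show ?thesis
    by (auto simp: continuous_map_in_subtopology)
qed

text \<open>Each 1-cell is sent along a path joining the images of its two endpoints.\<close>

lemma attached_1cells_extension:
  assumes att: "attached_cells 1 X A"
    and \<rho>: "continuous_map (subtopology X A) Y \<rho>" and Y: "path_connected_space Y"
  obtains r where "continuous_map X Y r" "\<And>x. x \<in> A \<Longrightarrow> r x = \<rho> x"
proof -
  obtain I \<phi> where A: "A \<subseteq> topspace X" and cells: "characteristic_maps 1 X A I \<phi>"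
    using att by (auto simp: attached_cells_iff_characteristic_maps)
  define e where "e t = (\<lambda>j::nat. if j = 0 then t else 0)" for t :: real
  have "\<rho> (\<phi> i (e t)) \<in> topspace Y" if "i \<in> I" "t = -1 \<or> t = 1" for i t
  proof -
    have "e t \<in> disc_boundary 1"
      using that(2) by (auto simp: e_def disc_boundary_def topspace_Euclidean_space)
    then have "\<phi> i (e t) \<in> topspace (subtopology X A)"
      using cells that(1) A by (auto simp: characteristic_maps_def)
    then show ?thesis
      using continuous_map_funspace[OF \<rho>] by auto
  qed
  then have "\<exists>\<gamma>. pathin Y \<gamma> \<and> \<gamma> 0 = \<rho> (\<phi> i (e (-1))) \<and> \<gamma> 1 = \<rho> (\<phi> i (e 1))" if "i \<in> I" for i
    using Y that unfolding path_connected_space_def by blast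
  then obtain \<gamma> where \<gamma>: "\<And>i. i \<in> I \<Longrightarrow>
      pathin Y (\<gamma> i) \<and> \<gamma> i 0 = \<rho> (\<phi> i (e (-1))) \<and> \<gamma> i 1 = \<rho> (\<phi> i (e 1))"
    by metis
  show thesis
  proof (rule attached_cells_extension[OF cells A \<rho>, of "\<lambda>i x. \<gamma> i ((x 0 + 1) / 2)"])
    show "continuous_map (disc 1) Y (\<lambda>x. \<gamma> i ((x 0 + 1) / 2))" if "i \<in> I" for i
      using continuous_map_compose[OF continuous_map_disc_1_to_unit_interval, of Y "\<gamma> i"] \<gamma>[OF that]
      by (simp add: pathin_def o_def)
    show "\<gamma> i ((x 0 + 1) / 2) = \<rho> (\<phi> i x)" if "i \<in> I" "x \<in> disc_boundary 1" for i x
      using disc_boundary_1_cases[OF that(2)] \<gamma>[OF that(1)] by (auto simp: e_def)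
  qed (rule that)
qed

lemma attached_1cells_retraction_path_component:
  assumes cw: "cw_complex (subtopology X A)" and att: "attached_cells 1 X A" and "a \<in> A"
  obtains r where "continuous_map X (subtopology X A) r"
    "\<And>x. x \<in> path_component_of_set (subtopology X A) a \<Longrightarrow> r x = x"
proof -
  let ?C = "path_component_of_set (subtopology X A) a"
  have "A \<subseteq> topspace X"
    using att by (simp add: attached_cells_def)
  then have "a \<in> ?C"
    using \<open>a \<in> A\<close> by (auto simp: path_component_of_refl)
  then have \<rho>: "continuous_map (subtopology X A) (subtopology (subtopology X A) ?C)
      (\<lambda>y. if y \<in> ?C then y else a)"
    by (intro continuous_map_collapse_clopen cw_complex_path_component_clopen[OF cw])
  have "path_connected_space (subtopology (subtopology X A) ?C)"
    using path_connectedin_path_component_of[of "subtopology X A" a]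
    by (simp add: path_connectedin_def)
  then obtain r where r: "continuous_map X (subtopology (subtopology X A) ?C) r"
    and r_A: "\<And>x. x \<in> A \<Longrightarrow> r x = (if x \<in> ?C then x else a)"
    using attached_1cells_extension[OF att \<rho>] by metis
  show thesis
  proof (rule that)
    show "continuous_map X (subtopology X A) r"
      using r by (simp add: continuous_map_in_subtopology)
    show "r x = x" if "x \<in> ?C" for x
      using that r_A path_component_of_subset_topspace by fastforce
  qed
qed

lemma pi1_incl_injective_attached_1cells:
  assumes cw: "cw_complex (subtopology X A)" and att: "attached_cells 1 X A" and "x0 \<in> A"
  shows "pi1_incl_injective X A x0"
  unfolding pi1_incl_injective_def
proof (intro allI impI, elim conjE)
  fix p q
  assume p: "based_loop (subtopology X A) x0 p" and q: "based_loop (subtopology X A) x0 q"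
    and pq: "homotopic_with (\<lambda>h. h 0 = x0 \<and> h 1 = x0) unit_interval X p q"
  let ?C = "path_component_of_set (subtopology X A) x0"
  obtain r where r: "continuous_map X (subtopology X A) r" and r_C: "\<And>x. x \<in> ?C \<Longrightarrow> r x = x"
    using attached_1cells_retraction_path_component[OF cw att \<open>x0 \<in> A\<close>] by metis
  have "x0 \<in> ?C"
    using att \<open>x0 \<in> A\<close> by (auto simp: attached_cells_def path_component_of_refl)
  then have rpq: "homotopic_with (\<lambda>h. h 0 = x0 \<and> h 1 = x0) unit_interval (subtopology X A)
      (r \<circ> p) (r \<circ> q)"
    using r_C by (intro homotopic_with_compose_continuous_map_left[OF pq r]) auto
  have loop_in_C: "f t \<in> ?C" if f: "based_loop (subtopology X A) x0 f" and t: "t \<in> {0..1}" for f t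
  proof -
    have "pathin (subtopology X A) f"
      using f by (simp add: based_loop_def unit_interval_def pathin_def)
    then have "f ` {0..1} \<subseteq> ?C"
      using f by (intro path_component_of_maximal path_connectedin_path_image)
        (auto simp: based_loop_def)
    then show ?thesis
      using t by blast
  qed
  show "homotopic_with (\<lambda>h. h 0 = x0 \<and> h 1 = x0) unit_interval (subtopology X A) p q"
  proof (rule homotopic_with_eq[OF rpq])
    show "p x = (r \<circ> p) x" "q x = (r \<circ> q) x" if "x \<in> topspace unit_interval" for x
      using that loop_in_C[OF p] loop_in_C[OF q] r_C by (auto simp: unit_interval_def)
  qed (simp add: unit_interval_def)
qed

lemma pi2_incl_surjective_if_rel_pi2_incl_surjective:
  assumes surj: "rel_pi2_incl_surjective L Kp K x0" and "K \<subseteq> Kp" and "x0 \<in> K"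
  shows "pi2_incl_surjective L Kp x0"
  unfolding pi2_incl_surjective_def
proof (intro allI impI)
  fix f
  assume f: "based_2sphere L x0 f"
  then have f_bd: "\<forall>z\<in>square_bd. f z = x0"
    by (simp add: based_2sphere_def)
  then have "rel_2disc L K x0 f"
    using f \<open>x0 \<in> K\<close> square_J_subset_bd by (auto simp: based_2sphere_def rel_2disc_def)
  then obtain m where m: "continuous_map square (subtopology L Kp) m"
    and mf: "homotopic_with (\<lambda>h. \<forall>z\<in>square_bd. h z = f z) square L m f"
    by (rule rel_pi2_incl_surjective_homotopic_rel_boundary[OF surj \<open>K \<subseteq> Kp\<close>])
  have "based_2sphere (subtopology L Kp) x0 m"
    using m f_bd homotopic_with_imp_property[OF mf] by (simp add: based_2sphere_def)
  moreover have "homotopic_with (\<lambda>h. \<forall>z\<in>square_bd. h z = x0) square L m f"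
    using mf by (rule homotopic_with_mono) (simp add: f_bd)
  ultimately show "\<exists>g. based_2sphere (subtopology L Kp) x0 g \<and>
      homotopic_with (\<lambda>h. \<forall>z\<in>square_bd. h z = x0) square L g f"
    by blast
qed

lemma pi1_incl_injective_if_rel_pi2_incl_surjective:
  assumes cw: "cw_complex (subtopology L K)" and att: "attached_cells 1 (subtopology L Kp) K"
    and "K \<subseteq> Kp" and "x0 \<in> K" and surj: "rel_pi2_incl_surjective L Kp K x0"
  shows "pi1_incl_injective L K x0"
  unfolding pi1_incl_injective_def
proof (intro allI impI, elim conjE)
  fix p q
  assume p: "based_loop (subtopology L K) x0 p" and q: "based_loop (subtopology L K) x0 q"
    and pq: "homotopic_with (\<lambda>h. h 0 = x0 \<and> h 1 = x0) unit_interval L p q"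
  obtain P where P: "continuous_map (top_of_set ({0..1::real} \<times> {0..1::real})) L P"
    and P_left: "\<And>t. P (0, t) = p t" and P_right: "\<And>t. P (1, t) = q t"
    and P_ends: "\<And>u. u \<in> {0..1} \<Longrightarrow> P (u, 0) = x0 \<and> P (u, 1) = x0"
    by (rule homotopic_with_top_of_set_elim[OF pq[unfolded unit_interval_def]], rule that)
  obtain f where f: "continuous_map square L f" and f_J: "\<And>z. z \<in> square_J \<Longrightarrow> f z = x0"
    and f_bottom: "\<And>s. f (s, 0) = P (three_sides s)"
    using square_of_loop_homotopy[OF P P_ends] by blast
  have P_K: "P z \<in> K" if "z \<in> square_J" for z
    using that p q P_ends \<open>x0 \<in> K\<close>
    by (auto simp: square_J_def based_loop_def continuous_map_in_subtopology unit_interval_def P_left P_right)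
  have "f z \<in> K" if "z \<in> square_bd" for z
    using that by (cases rule: square_bdE) (auto simp: f_J f_bottom \<open>x0 \<in> K\<close> P_K three_sides_in_square_J)
  then have "rel_2disc L K x0 f"
    using f f_J by (auto simp: rel_2disc_def)
  then obtain m where m: "continuous_map square (subtopology L Kp) m"
    and mf: "homotopic_with (\<lambda>h. \<forall>z\<in>square_bd. h z = f z) square L m f"
    by (rule rel_pi2_incl_surjective_homotopic_rel_boundary[OF surj \<open>K \<subseteq> Kp\<close>])
  have m_bd: "\<forall>z\<in>square_bd. m z = f z"
    using homotopic_with_imp_property[OF mf] by blast
  have pq_Kp: "homotopic_with (\<lambda>h. h 0 = x0 \<and> h 1 = x0) unit_interval (subtopology L Kp) p q"
  proof (rule homotopic_loops_of_square[OF m])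
    show "m z = x0" if "z \<in> square_J" for z
    proof -
      have "z \<in> square_bd"
        using that square_J_subset_bd by blast
      then show ?thesis
        using that m_bd f_J by simp
    qed
    show "m (s, 0) = P (three_sides s)" if "s \<in> {0..1}" for s
      using m_bd bottom_in_square_bd[OF that] f_bottom by simp
  qed (use P_left P_right P_ends in auto)
  have K_Kp: "subtopology (subtopology L Kp) K = subtopology L K"
    using \<open>K \<subseteq> Kp\<close> by (simp add: subtopology_subtopology Int_absorb1)
  then have "pi1_incl_injective (subtopology L Kp) K x0"
    using cw att \<open>x0 \<in> K\<close> by (intro pi1_incl_injective_attached_1cells) simp_all
  then show "homotopic_with (\<lambda>h. h 0 = x0 \<and> h 1 = x0) unit_interval (subtopology L K) p q"
    using p q pq_Kp unfolding pi1_incl_injective_def K_Kp by blast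
qed

lemma rel_2disc_bottom_null_homotopy:
  assumes inj: "pi1_incl_injective L K x0" and f: "rel_2disc L K x0 f"
  obtains H where "continuous_map square (subtopology L K) H" "\<And>s. H (s, 0) = f (s, 0)"
    "\<And>s. H (s, 1) = x0" "\<And>t. t \<in> {0..1} \<Longrightarrow> H (0, t) = x0 \<and> H (1, t) = x0"
proof -
  have cf: "continuous_map square L f" and f_bd: "f ` square_bd \<subseteq> K"
    and f_J: "\<And>z. z \<in> square_J \<Longrightarrow> f z = x0"
    using f by (auto simp: rel_2disc_def)
  have "(0, 1) \<in> square_J" "(0, 0) \<in> square_bd"
    by (auto simp: square_J_def square_bd_def)
  then have x0: "x0 \<in> topspace L" "x0 \<in> K"
    using continuous_map_image_subset_topspace[OF cf] f_bd f_J square_J_subset_bd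
    by (force simp: topspace_square)+
  have "continuous_map (top_of_set ({0..1} \<times> {0..1})) L (\<lambda>w. f (snd w, fst w))"
    by (rule continuous_map_top_of_set_compose[OF _ _ cf[unfolded square_def]])
       (auto intro!: continuous_intros)
  then have "homotopic_with (\<lambda>h. h 0 = x0 \<and> h 1 = x0) unit_interval L (\<lambda>s. f (s, 0)) (\<lambda>_. x0)"
    unfolding unit_interval_def
    by (intro homotopic_with_top_of_set_intro[where h = "\<lambda>w. f (snd w, fst w)"])
       (auto simp: f_J square_J_def)
  moreover have "based_loop (subtopology L K) x0 (\<lambda>s. f (s, 0))"
  proof -
    have "continuous_map unit_interval L (\<lambda>s. f (s, 0))"
      unfolding unit_interval_def
      by (rule continuous_map_top_of_set_compose[OF _ _ cf[unfolded square_def]])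
         (auto intro!: continuous_intros)
    moreover have "f (s, 0) \<in> K" if "s \<in> {0..1}" for s
      using f_bd bottom_in_square_bd[OF that] by blast
    ultimately show ?thesis
      by (auto simp: based_loop_def continuous_map_in_subtopology unit_interval_def f_J square_J_def)
  qed
  moreover have "based_loop (subtopology L K) x0 (\<lambda>_. x0)"
    using x0 by (simp add: based_loop_def)
  ultimately have null: "homotopic_with (\<lambda>h. h 0 = x0 \<and> h 1 = x0) unit_interval (subtopology L K)
      (\<lambda>s. f (s, 0)) (\<lambda>_. x0)"
    using inj unfolding pi1_incl_injective_def by blast
  obtain N where N: "continuous_map (top_of_set ({0..1::real} \<times> {0..1::real})) (subtopology L K) N"
    and N0: "\<And>s. N (0, s) = f (s, 0)" and N1: "\<And>s. N (1, s) = x0"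
    and N_ends: "\<And>u. u \<in> {0..1} \<Longrightarrow> N (u, 0) = x0 \<and> N (u, 1) = x0"
    by (rule homotopic_with_top_of_set_elim[OF null[unfolded unit_interval_def]], rule that)
  show thesis
  proof (rule that[of "\<lambda>z. N (snd z, fst z)"])
    show "continuous_map square (subtopology L K) (\<lambda>z. N (snd z, fst z))"
      unfolding square_def
      by (rule continuous_map_top_of_set_compose[OF _ _ N]) (auto intro!: continuous_intros)
  qed (simp_all add: N0 N1 N_ends)
qed

lemma rel_2disc_homotopic_sphere:
  assumes inj: "pi1_incl_injective L K x0" and f: "rel_2disc L K x0 f" and "x0 \<in> K"
  obtains f' where "based_2sphere L x0 f'" "homotopic_with (rel_square_cond K x0) square L f f'"
proof -
  obtain H where H: "continuous_map square (subtopology L K) H" and H0: "\<And>s. H (s, 0) = f (s, 0)"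
    and H1: "\<And>s. H (s, 1) = x0" and H_sides: "\<And>t. t \<in> {0..1} \<Longrightarrow> H (0, t) = x0 \<and> H (1, t) = x0"
    using rel_2disc_bottom_null_homotopy[OF inj f] by blast
  have cf: "continuous_map square L f" and f_J: "\<And>z. z \<in> square_J \<Longrightarrow> f z = x0"
    using f by (auto simp: rel_2disc_def)
  have H_L: "continuous_map square L H" and H_K: "\<And>s t. s \<in> {0..1} \<Longrightarrow> t \<in> {0..1} \<Longrightarrow> H (s, t) \<in> K"
    using H by (auto simp: continuous_map_in_subtopology topspace_square)
  have ff': "homotopic_with (rel_square_cond K x0) square L f (stack_below f H)"
    by (rule homotopic_stack_below_rel[OF cf H_L _ f_J H_sides H_K \<open>x0 \<in> K\<close>]) (simp add: H0)
  have f'_J: "\<forall>z\<in>square_J. stack_below f H z = x0"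
    using homotopic_with_imp_property[OF ff'] by blast
  have "stack_below f H z = x0" if "z \<in> square_bd" for z
    using that by (cases rule: square_bdE) (use f'_J H1 in \<open>auto simp: stack_below_def\<close>)
  then have "based_2sphere L x0 (stack_below f H)"
    using continuous_map_stack_below[OF cf H_L] H0 by (simp add: based_2sphere_def)
  then show thesis
    using ff' by (rule that)
qed

lemma rel_pi2_incl_surjective_if_pi1_injective_pi2_surjective:
  assumes "x0 \<in> K" and inj: "pi1_incl_injective L K x0" and surj: "pi2_incl_surjective L Kp x0"
  shows "rel_pi2_incl_surjective L Kp K x0"
  unfolding rel_pi2_incl_surjective_def
proof (intro allI impI)
  fix f
  assume "rel_2disc L K x0 f"
  then obtain f' where f': "based_2sphere L x0 f'"
    and ff': "homotopic_with (rel_square_cond K x0) square L f f'"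
    using rel_2disc_homotopic_sphere[OF inj _ \<open>x0 \<in> K\<close>] by blast
  then obtain g where g: "based_2sphere (subtopology L Kp) x0 g"
    and gf': "homotopic_with (\<lambda>h. \<forall>z\<in>square_bd. h z = x0) square L g f'"
    using surj unfolding pi2_incl_surjective_def by blast
  have sphere_rel: "rel_square_cond K x0 h" if "\<forall>z\<in>square_bd. h z = x0" for h
    using that \<open>x0 \<in> K\<close> square_J_subset_bd by auto
  have "rel_square_cond K x0 g"
    using g by (intro sphere_rel) (simp add: based_2sphere_def)
  then have "rel_2disc (subtopology L Kp) K x0 g"
    using g by (simp add: based_2sphere_def rel_2disc_def)
  moreover have "homotopic_with (rel_square_cond K x0) square L g f"
    using homotopic_with_mono[OF gf' sphere_rel] homotopic_with_symD[OF ff']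
    by (rule homotopic_with_trans)
  ultimately show "\<exists>g. rel_2disc (subtopology L Kp) K x0 g \<and>
      homotopic_with (rel_square_cond K x0) square L g f"
    by blast
qed

theorem lemma3p1:
  fixes L :: "'a topology" and K Kp :: "'a set" and x0 :: 'a
  assumes "K \<subseteq> Kp" and "Kp \<subseteq> topspace L"
    and "cw_complex (subtopology L K)" and "cw_complex (subtopology L Kp)" and "cw_complex L"
    and "attached_cells 1 (subtopology L Kp) K"
    and "attached_cells 2 L Kp"
    and "x0 \<in> K"
  shows "rel_pi2_incl_surjective L Kp K x0 \<longleftrightarrow>
           (pi1_incl_injective L K x0 \<and> pi2_incl_surjective L Kp x0)"
  using pi1_incl_injective_if_rel_pi2_incl_surjective[OF assms(3,6,1,8)]
    pi2_incl_surjective_if_rel_pi2_incl_surjective[OF _ assms(1,8)]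
    rel_pi2_incl_surjective_if_pi1_injective_pi2_surjective[OF assms(8)]
  by blast

end
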